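(* Fix constants $\sigma_f^2>0$, $\sigma_a^2\ge 0$ and $\alpha\in\mathbb{R}$ with $|\alpha|\le\sigma_f$, and an integer $n\ge 1$. Let $\mathcal{C}$ be the class of all distributions (in the sense of the context) with $\operatorname{Var}(f(z))=\sigma_f^2$, $\mathbb{E}_z[\operatorname{Var}(Y(z))]=\sigma_a^2$ and $\operatorname{Cov}(f(z),g(z))=\alpha$. Let $\rho=\alpha/\sigma_f$ and define the control variates estimator $$\hat\mu_{\mathrm{cv}}=\frac{1}{n}\sum_{i=1}^n \bigl(y^{(i)}-\alpha\, g(z^{(i)})\bigr).$$ Then (i) for every distribution in $\mathcal{C}$, $$\operatorname{Var}(\hat\mu_{\mathrm{cv}})=\frac{1}{n}\bigl(\sigma_f^2(1-\rho^2)+\sigma_a^2\bigr);$$ and (ii) for every estimator $\hat\mu$ that is a (measurable) function of $(y^{(i)},g(z^{(i)}))_{i=1}^n$ and is unbiased for $\mu$ (i.e. $\mathbb{E}[\hat\mu]=\mu$) under every distribution in $\mathcal{C}$, one has $$\sup_{\mathcal{C}}\operatorname{Var}(\hat\mu)\ \ge\ \frac{1}{n}\bigl(\sigma_f^2(1-\rho^2)+\sigma_a^2\bigr)=\sup_{\mathcal{C}}\operatorname{Var}(\hat\mu_{\mathrm{cv}}),$$ i.e. no unbiased estimator has lower worst-case variance than $\hat\mu_{\mathrm{cv}}$.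
   Context: Setting: a "distribution" consists of a random input $z$ taking values in some measurable space (in the paper's application, $z$ is uniform over a finite set of system outputs), a measurable real function $g$ (the automatic metric) normalized so that $\mathbb{E}[g(z)]=0$ and $\operatorname{Var}(g(z))=1$, and, for each $z$, a real random variable $Y(z)$ (a human judgment) with finite second moment. Define the human metric $f(z)=\mathbb{E}[Y(z)\mid z]$, the target $\mu=\mathbb{E}_z[f(z)]$, $\sigma_f^2=\operatorname{Var}(f(z))$ and $\sigma_a^2=\mathbb{E}_z[\operatorname{Var}(Y(z)\mid z)]$. Sampling: $z^{(1)},\dots,z^{(n)}$ are drawn independently from the distribution of $z$, and given them $y^{(i)}=Y(z^{(i)})$ are drawn independently (human judgments on different samples are independent given the $z^{(i)}$). The constant $\alpha$ is treated as known. *)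

theory Defs
  imports "HOL-Probability.Probability"
begin

text \<open>A "distribution" in the sense of the paper: a law for the input z,
  the automatic metric g, and for each z the law of the human judgment Y(z)
  (a Markov kernel).\<close>
record 'z hdist =
  zlaw :: "'z measure"
  gmet :: "'z \<Rightarrow> real"
  ylaw :: "'z \<Rightarrow> real measure"

text \<open>Variance with values in ennreal (infinite if X is not square integrable).\<close>
definition ennvar :: "'a measure \<Rightarrow> ('a \<Rightarrow> real) \<Rightarrow> ennreal" where
  "ennvar M X = (\<integral>\<^sup>+ x. ennreal ((X x - (\<integral>y. X y \<partial>M))^2) \<partial>M)"

definition valid_dist :: "('z, 'b) hdist_scheme \<Rightarrow> bool" where
  "valid_dist D \<longleftrightarrow>
     prob_space (zlaw D) \<and>
     gmet D \<in> borel_measurable (zlaw D) \<and>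
     ylaw D \<in> measurable (zlaw D) (subprob_algebra borel) \<and>
     (\<forall>z\<in>space (zlaw D). prob_space (ylaw D z) \<and> integrable (ylaw D z) (\<lambda>y. y^2)) \<and>
     integrable (zlaw D) (gmet D) \<and> (\<integral>z. gmet D z \<partial>zlaw D) = 0 \<and>
     ennvar (zlaw D) (gmet D) = 1"

definition human_metric :: "('z, 'b) hdist_scheme \<Rightarrow> 'z \<Rightarrow> real" where
  "human_metric D z = (\<integral>y. y \<partial>ylaw D z)"

definition target :: "('z, 'b) hdist_scheme \<Rightarrow> real" where
  "target D = (\<integral>z. human_metric D z \<partial>zlaw D)"

definition in_class :: "real \<Rightarrow> real \<Rightarrow> real \<Rightarrow> ('z, 'b) hdist_scheme \<Rightarrow> bool" where
  "in_class sf2 sa2 \<alpha> D \<longleftrightarrow>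
     valid_dist D \<and>
     ennvar (zlaw D) (human_metric D) = ennreal sf2 \<and>
     (\<integral>\<^sup>+ z. ennvar (ylaw D z) (\<lambda>y. y) \<partial>zlaw D) = ennreal sa2 \<and>
     integrable (zlaw D) (\<lambda>z. (human_metric D z - target D) * (gmet D z - (\<integral>x. gmet D x \<partial>zlaw D))) \<and>
     (\<integral>z. (human_metric D z - target D) * (gmet D z - (\<integral>x. gmet D x \<partial>zlaw D)) \<partial>zlaw D) = \<alpha>"

definition dist_class :: "real \<Rightarrow> real \<Rightarrow> real \<Rightarrow> 'z hdist set" where
  "dist_class sf2 sa2 \<alpha> = {D. in_class sf2 sa2 \<alpha> D}"

definition joint_law :: "('z, 'b) hdist_scheme \<Rightarrow> ('z \<times> real) measure" where
  "joint_law D = zlaw D \<bind> (\<lambda>z. distr (ylaw D z) (zlaw D \<Otimes>\<^sub>M borel) (\<lambda>y. (z, y)))"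

definition sample_space :: "nat \<Rightarrow> ('z, 'b) hdist_scheme \<Rightarrow> (nat \<Rightarrow> 'z \<times> real) measure" where
  "sample_space n D = (\<Pi>\<^sub>M i\<in>{..<n}. joint_law D)"

definition obs :: "nat \<Rightarrow> ('z, 'b) hdist_scheme \<Rightarrow> (nat \<Rightarrow> 'z \<times> real) \<Rightarrow> nat \<Rightarrow> real \<times> real" where
  "obs n D \<omega> = (\<lambda>i\<in>{..<n}. (snd (\<omega> i), gmet D (fst (\<omega> i))))"

definition cv_est :: "nat \<Rightarrow> real \<Rightarrow> ('z, 'b) hdist_scheme \<Rightarrow> (nat \<Rightarrow> 'z \<times> real) \<Rightarrow> real" where
  "cv_est n \<alpha> D \<omega> = (\<Sum>i<n. snd (\<omega> i) - \<alpha> * gmet D (fst (\<omega> i))) / real n"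

end

theory Submission
  imports Defs
begin

text \<open>
  (i) The residual \<open>y - \<alpha> g(z)\<close> has mean \<open>\<mu>\<close>, and conditioning on \<open>z\<close> splits its variance into
  \<open>E Var(Y | z) = \<sigma>\<^sub>a\<^sup>2\<close> and \<open>Var (f - \<alpha> g) = \<sigma>\<^sub>f\<^sup>2 - \<alpha>\<^sup>2\<close>; the control variates estimator is the
  mean of \<open>n\<close> independent copies of the residual.

  (ii) The bound is already attained on a Gaussian subfamily of the class. The input \<open>z\<close> encodes a
  Rademacher sign \<open>s = g(z)\<close> and \<open>w \<sim> N(a, 1)\<close>, the human metric is \<open>f = \<alpha> s + c w\<close> with
  \<open>c\<^sup>2 = \<sigma>\<^sub>f\<^sup>2 - \<alpha>\<^sup>2\<close>, and \<open>Y = f + \<sigma>\<^sub>a e\<close> with \<open>e \<sim> N(b, 1)\<close>, so the target is \<open>c a + \<sigma>\<^sub>a b\<close>.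
  For an estimator unbiased on the whole family, the Hammersley-Chapman-Robbins inequality for the
  shift \<open>(a, b) = t (c, \<sigma>\<^sub>a) / (c\<^sup>2 + \<sigma>\<^sub>a\<^sup>2)\<close> gives
  \<open>t\<^sup>2 \<le> (exp (n t\<^sup>2 / (c\<^sup>2 + \<sigma>\<^sub>a\<^sup>2)) - 1) Var\<^sub>0\<close>, and letting \<open>t \<rightarrow> 0\<close> yields
  \<open>Var\<^sub>0 \<ge> (c\<^sup>2 + \<sigma>\<^sub>a\<^sup>2) / n\<close>. The shift acts on the latent Gaussian coordinates \<open>w\<close> and \<open>e\<close>,
  so the likelihood ratio is explicit even when \<open>\<sigma>\<^sub>a = 0\<close>.
\<close>

section \<open>Square-integrable random variables\<close>

lemma square_integrable_imp_integrable_mult: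
  fixes f g :: "'a \<Rightarrow> real"
  assumes [measurable]: "f \<in> borel_measurable M" "g \<in> borel_measurable M"
    and "integrable M (\<lambda>x. f x ^ 2)" "integrable M (\<lambda>x. g x ^ 2)"
  shows "integrable M (\<lambda>x. f x * g x)"
proof (rule Bochner_Integration.integrable_bound)
  show "integrable M (\<lambda>x. f x ^ 2 + g x ^ 2)"
    using assms by auto
  have "\<bar>f x * g x\<bar> \<le> f x ^ 2 + g x ^ 2" for x
  proof -
    have "\<bar>f x * g x\<bar> \<le> 2 * \<bar>f x\<bar> * \<bar>g x\<bar>"
      by (simp add: abs_mult)
    also have "\<dots> \<le> f x ^ 2 + g x ^ 2"
      using sum_squares_bound[of "\<bar>f x\<bar>" "\<bar>g x\<bar>"] by simp
    finally show ?thesis .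
  qed
  then show "AE x in M. norm (f x * g x) \<le> norm (f x ^ 2 + g x ^ 2)"
    by simp
qed measurable

lemma square_integrable_add:
  fixes f g :: "'a \<Rightarrow> real"
  assumes "f \<in> borel_measurable M" "g \<in> borel_measurable M"
    and "integrable M (\<lambda>x. f x ^ 2)" "integrable M (\<lambda>x. g x ^ 2)"
  shows "integrable M (\<lambda>x. (f x + g x) ^ 2)"
proof -
  have "integrable M (\<lambda>x. f x ^ 2 + 2 * (f x * g x) + g x ^ 2)"
    using assms square_integrable_imp_integrable_mult[OF assms] by auto
  then show ?thesis
    by (simp add: power2_eq_square algebra_simps)
qed

lemma (in finite_measure) square_integrable_diff_const_iff:
  fixes f :: "'a \<Rightarrow> real"
  assumes [measurable]: "f \<in> borel_measurable M"
  shows "integrable M (\<lambda>x. (f x - c) ^ 2) \<longleftrightarrow> integrable M (\<lambda>x. f x ^ 2)"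
proof
  assume "integrable M (\<lambda>x. (f x - c) ^ 2)"
  then have "integrable M (\<lambda>x. ((f x - c) + c) ^ 2)"
    by (intro square_integrable_add) auto
  then show "integrable M (\<lambda>x. f x ^ 2)"
    by simp
next
  assume "integrable M (\<lambda>x. f x ^ 2)"
  then have "integrable M (\<lambda>x. (f x + - c) ^ 2)"
    by (intro square_integrable_add) auto
  then show "integrable M (\<lambda>x. (f x - c) ^ 2)"
    by simp
qed

lemma Cauchy_Schwarz_integral:
  fixes f g :: "'a \<Rightarrow> real"
  assumes [measurable]: "f \<in> borel_measurable M" "g \<in> borel_measurable M"
    and f2: "integrable M (\<lambda>x. f x ^ 2)" and g2: "integrable M (\<lambda>x. g x ^ 2)"
  shows "(\<integral>x. f x * g x \<partial>M) ^ 2 \<le> (\<integral>x. f x ^ 2 \<partial>M) * (\<integral>x. g x ^ 2 \<partial>M)"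
proof -
  define A B C where "A = (\<integral>x. f x ^ 2 \<partial>M)" and "B = (\<integral>x. f x * g x \<partial>M)"
    and "C = (\<integral>x. g x ^ 2 \<partial>M)"
  have fg: "integrable M (\<lambda>x. f x * g x)"
    by (rule square_integrable_imp_integrable_mult) (use assms in auto)
  have quadratic_nonneg: "0 \<le> A - 2 * l * B + l ^ 2 * C" for l
  proof -
    have "0 \<le> (\<integral>x. (f x - l * g x) ^ 2 \<partial>M)"
      by simp
    also have "\<dots> = (\<integral>x. f x ^ 2 - 2 * l * (f x * g x) + l ^ 2 * g x ^ 2 \<partial>M)"
      by (rule Bochner_Integration.integral_cong) (auto simp: power2_eq_square algebra_simps)
    also have "\<dots> = A - 2 * l * B + l ^ 2 * C"
      using f2 g2 fg by (simp add: A_def B_def C_def)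
    finally show ?thesis .
  qed
  have "B ^ 2 \<le> A * C"
  proof (cases "C = 0")
    case True
    have "B = 0"
    proof (rule ccontr)
      assume "B \<noteq> 0"
      with True quadratic_nonneg[of "(A + 1) / (2 * B)"] show False
        by (simp add: field_simps)
    qed
    then show ?thesis
      using True by simp
  next
    case False
    then have "C > 0"
      by (simp add: C_def order_less_le)
    with quadratic_nonneg[of "B / C"] show ?thesis
      by (simp add: power2_eq_square field_simps)
  qed
  then show ?thesis
    by (simp add: A_def B_def C_def)
qed

lemma (in prob_space) has_bochner_integral_const: "has_bochner_integral M (\<lambda>x. c) (c :: real)"
  by (simp add: has_bochner_integral_iff prob_space)

lemma (in prob_space) ennvar_eq_variance:
  fixes f :: "'a \<Rightarrow> real"
  assumes [measurable]: "f \<in> borel_measurable M" and "integrable M (\<lambda>x. f x ^ 2)"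
  shows "ennvar M f = ennreal (variance f)"
  unfolding ennvar_def
  using assms square_integrable_diff_const_iff
  by (intro nn_integral_eq_integral) auto

lemma (in prob_space) ennvar_eqI:
  fixes F :: "'a \<Rightarrow> real"
  assumes "has_bochner_integral M F m" and "has_bochner_integral M (\<lambda>x. (F x - m) ^ 2) V"
  shows "ennvar M F = ennreal V"
  using assms unfolding ennvar_def has_bochner_integral_iff
  by (subst nn_integral_eq_integral) auto

lemma (in prob_space) ennvar_finite_imp_square_integrable:
  fixes f :: "'a \<Rightarrow> real"
  assumes [measurable]: "f \<in> borel_measurable M" and "ennvar M f \<noteq> \<infinity>"
  shows "integrable M (\<lambda>x. f x ^ 2)"
proof -
  have "integrable M (\<lambda>x. (f x - expectation f) ^ 2)"
    using assms(2) unfolding ennvar_def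
    by (intro integrableI_nn_integral_finite[where x="enn2real (ennvar M f)"])
       (auto simp: ennvar_def less_top[symmetric])
  then show ?thesis
    by (simp add: square_integrable_diff_const_iff)
qed

lemma (in prob_space) expectation_variance_from_square_deviations:
  fixes P :: "'a \<Rightarrow> real"
  assumes [measurable]: "P \<in> borel_measurable M"
    and sq: "integrable M (\<lambda>x. P x ^ 2)"
    and dev: "\<And>c. expectation (\<lambda>x. (P x - c) ^ 2) = V + (m - c) ^ 2"
  shows "expectation P = m" and "variance P = V"
proof -
  have "integrable M P"
    by (rule square_integrable_imp_integrable[OF _ sq]) simp
  then have expand: "expectation (\<lambda>x. (P x - c) ^ 2) = expectation (\<lambda>x. P x ^ 2) - 2 * c * expectation P + c ^ 2" for c
    using sq by (simp add: power2_diff prob_space)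
  show mean: "expectation P = m"
    using expand[of 0] expand[of 1] dev[of 0] dev[of 1] by (simp add: power2_eq_square algebra_simps)
  show "variance P = V"
    using dev[of m] by (simp add: mean)
qed

lemma has_bochner_integral_pair_measure_mult:
  fixes f g :: "_ \<Rightarrow> real"
  assumes "sigma_finite_measure M" "sigma_finite_measure N"
    and f: "integrable M f" and g: "integrable N g"
  shows "has_bochner_integral (M \<Otimes>\<^sub>M N) (\<lambda>x. f (fst x) * g (snd x)) ((\<integral>x. f x \<partial>M) * (\<integral>y. g y \<partial>N))"
proof -
  interpret pair_sigma_finite M N
    using assms(1,2) by (simp add: pair_sigma_finite_def)
  have [measurable]: "f \<in> borel_measurable M" "g \<in> borel_measurable N"
    using f g by auto
  have fg: "integrable (M \<Otimes>\<^sub>M N) (\<lambda>x. f (fst x) * g (snd x))"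
    by (rule Fubini_integrable) (use f g in \<open>auto simp: abs_mult\<close>)
  then show ?thesis
    using integral_fst'[OF fg] by (simp add: has_bochner_integral_iff)
qed

lemma (in prob_space) integral_PiM_component:
  fixes F :: "'a \<Rightarrow> real" and I :: "'i set"
  assumes "i \<in> I" and "integrable M F"
  shows "integrable (\<Pi>\<^sub>M j\<in>I. M) (\<lambda>\<omega>. F (\<omega> i))"
    and "(\<integral>\<omega>. F (\<omega> i) \<partial>(\<Pi>\<^sub>M j\<in>I. M)) = expectation F"
proof -
  have component: "distr (\<Pi>\<^sub>M j\<in>I. M) M (\<lambda>\<omega>. \<omega> i) = M"
    by (rule distr_PiM_component) (use assms(1) prob_space_axioms in auto)
  have projection: "(\<lambda>\<omega>. \<omega> i) \<in> measurable (\<Pi>\<^sub>M j\<in>I. M) M"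
    using assms(1) by simp
  have F: "F \<in> borel_measurable M"
    using assms(2) by simp
  show "integrable (\<Pi>\<^sub>M j\<in>I. M) (\<lambda>\<omega>. F (\<omega> i))"
    using assms(2) integrable_distr_eq[OF projection F] component by simp
  show "(\<integral>\<omega>. F (\<omega> i) \<partial>(\<Pi>\<^sub>M j\<in>I. M)) = expectation F"
    using integral_distr[OF projection F] component by simp
qed

lemma (in prob_space) integral_PiM_centred_products:
  fixes Q :: "'a \<Rightarrow> real" and I :: "'i set"
  assumes I: "finite I" "i \<in> I" "j \<in> I"
    and [measurable]: "Q \<in> borel_measurable M"
    and Q2: "integrable M (\<lambda>x. Q x ^ 2)" and Q0: "expectation Q = 0"
  shows "integrable (\<Pi>\<^sub>M k\<in>I. M) (\<lambda>\<omega>. Q (\<omega> i) * Q (\<omega> j))"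
    and "(\<integral>\<omega>. Q (\<omega> i) * Q (\<omega> j) \<partial>(\<Pi>\<^sub>M k\<in>I. M)) = (if i = j then expectation (\<lambda>x. Q x ^ 2) else 0)"
proof -
  interpret PM: product_prob_space "\<lambda>_ :: 'i. M"
    by (rule product_prob_spaceI) (rule prob_space_axioms)
  have "integrable (\<Pi>\<^sub>M k\<in>I. M) (\<lambda>\<omega>. Q (\<omega> i) * Q (\<omega> j)) \<and>
    (\<integral>\<omega>. Q (\<omega> i) * Q (\<omega> j) \<partial>(\<Pi>\<^sub>M k\<in>I. M)) = (if i = j then expectation (\<lambda>x. Q x ^ 2) else 0)"
  proof (cases "i = j")
    case True
    then show ?thesis
      using integral_PiM_component[OF I(2) Q2] by (simp add: power2_eq_square)
  next
    case False
    define q where "q k x = (if k = i \<or> k = j then Q x else 1)" for k x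
    have Q1: "integrable M Q"
      by (rule square_integrable_imp_integrable[OF _ Q2]) simp
    have q: "integrable M (q k)" for k
      using Q1 unfolding q_def by (cases "k = i \<or> k = j") simp_all
    have "I \<inter> {k. k = i \<or> k = j} = {i, j}"
      using I by auto
    then have prod_q: "(\<Prod>k\<in>I. q k (\<omega> k)) = Q (\<omega> i) * Q (\<omega> j)" for \<omega>
      using I False by (simp add: q_def prod.If_cases)
    have "integrable (\<Pi>\<^sub>M k\<in>I. M) (\<lambda>\<omega>. \<Prod>k\<in>I. q k (\<omega> k))"
      by (rule PM.product_integrable_prod[OF I(1)]) (rule q)
    moreover have "(\<integral>\<omega>. (\<Prod>k\<in>I. q k (\<omega> k)) \<partial>(\<Pi>\<^sub>M k\<in>I. M)) = (\<Prod>k\<in>I. expectation (q k))"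
      by (rule PM.product_integral_prod[OF I(1)]) (rule q)
    moreover have "(\<Prod>k\<in>I. expectation (q k)) = 0"
      using I Q0 unfolding q_def by (intro prod_zero bexI[of _ i]) auto
    ultimately show ?thesis
      using False by (simp add: prod_q)
  qed
  then show "integrable (\<Pi>\<^sub>M k\<in>I. M) (\<lambda>\<omega>. Q (\<omega> i) * Q (\<omega> j))"
    and "(\<integral>\<omega>. Q (\<omega> i) * Q (\<omega> j) \<partial>(\<Pi>\<^sub>M k\<in>I. M)) = (if i = j then expectation (\<lambda>x. Q x ^ 2) else 0)"
    by auto
qed

lemma (in prob_space) ennvar_sample_mean:
  fixes P :: "'a \<Rightarrow> real" and n :: nat
  assumes [measurable]: "P \<in> borel_measurable M"
    and P2: "integrable M (\<lambda>x. P x ^ 2)" and n: "n \<ge> 1"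
  shows "ennvar (\<Pi>\<^sub>M i\<in>{..<n}. M) (\<lambda>\<omega>. (\<Sum>i<n. P (\<omega> i)) / real n) = ennreal (variance P / real n)"
proof -
  define \<Omega> where "\<Omega> = (\<Pi>\<^sub>M i\<in>{..<n}. M)"
  define Q where "Q x = P x - expectation P" for x
  define S where "S \<omega> = (\<Sum>i<n. Q (\<omega> i))" for \<omega>
  have [measurable]: "Q \<in> borel_measurable M"
    unfolding Q_def by simp
  have P1: "integrable M P"
    by (rule square_integrable_imp_integrable[OF _ P2]) simp
  have Q2: "integrable M (\<lambda>x. Q x ^ 2)"
    using P2 by (simp add: Q_def square_integrable_diff_const_iff)
  have Q0: "expectation Q = 0"
    using P1 unfolding Q_def by (simp add: prob_space)
  note cross = integral_PiM_centred_products[OF _ _ _ _ Q2 Q0, of "{..<n}", folded \<Omega>_def]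
  have S2: "S \<omega> ^ 2 = (\<Sum>i<n. \<Sum>j<n. Q (\<omega> i) * Q (\<omega> j))" for \<omega>
    by (simp add: S_def power2_eq_square sum_product)
  have S2_integrable: "integrable \<Omega> (\<lambda>\<omega>. S \<omega> ^ 2)"
    unfolding S2 using cross by (intro Bochner_Integration.integrable_sum) auto
  have "(\<integral>\<omega>. S \<omega> ^ 2 \<partial>\<Omega>) = (\<Sum>i<n. \<Sum>j<n. \<integral>\<omega>. Q (\<omega> i) * Q (\<omega> j) \<partial>\<Omega>)"
    unfolding S2 using cross
    by (subst Bochner_Integration.integral_sum)
       (auto intro!: Bochner_Integration.integrable_sum sum.cong Bochner_Integration.integral_sum)
  also have "\<dots> = (\<Sum>i<n. \<Sum>j<n. if i = j then variance P else 0)"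
    using cross by (simp add: Q_def)
  also have "\<dots> = real n * variance P"
    by simp
  finally have S2_integral: "(\<integral>\<omega>. S \<omega> ^ 2 \<partial>\<Omega>) = real n * variance P" .
  have mean: "(\<integral>\<omega>. (\<Sum>i<n. P (\<omega> i)) / real n \<partial>\<Omega>) = expectation P"
    using integral_PiM_component[OF _ P1, of _ "{..<n}", folded \<Omega>_def] n by simp
  have deviation: "(\<Sum>i<n. P (\<omega> i)) / real n - expectation P = S \<omega> / real n" for \<omega>
    using n by (simp add: S_def Q_def sum_subtractf field_simps)
  have "ennvar \<Omega> (\<lambda>\<omega>. (\<Sum>i<n. P (\<omega> i)) / real n) = (\<integral>\<^sup>+\<omega>. ennreal (S \<omega> ^ 2 / real n ^ 2) \<partial>\<Omega>)"
    unfolding ennvar_def mean deviation by (simp add: power_divide)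
  also have "\<dots> = ennreal (\<integral>\<omega>. S \<omega> ^ 2 / real n ^ 2 \<partial>\<Omega>)"
    using S2_integrable by (intro nn_integral_eq_integral) auto
  also have "(\<integral>\<omega>. S \<omega> ^ 2 / real n ^ 2 \<partial>\<Omega>) = variance P / real n"
    using S2_integral by (simp add: power2_eq_square)
  finally show ?thesis
    by (simp add: \<Omega>_def)
qed

section \<open>Product densities and the Chapman--Robbins bound\<close>

lemma indicator_PiE_eq_prod:
  assumes "x \<in> extensional I" and "finite I"
  shows "(indicator (Pi\<^sub>E I A) x :: ennreal) = (\<Prod>i\<in>I. indicator (A i) (x i))"
proof (cases "x \<in> Pi\<^sub>E I A")
  case True
  then show ?thesis
    by (auto simp: indicator_def PiE_iff intro!: prod.neutral[symmetric])
next
  case False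
  with assms(1) obtain i where "i \<in> I" "x i \<notin> A i"
    by (auto simp: PiE_iff)
  with False assms(2) show ?thesis
    by (auto intro!: prod_zero[symmetric] bexI[of _ i])
qed

lemma PiM_density:
  fixes L :: "'i \<Rightarrow> 'a \<Rightarrow> ennreal"
  assumes I: "finite I" and M: "\<And>i. prob_space (M i)"
    and [measurable]: "\<And>i. L i \<in> borel_measurable (M i)"
    and LM: "\<And>i. prob_space (density (M i) (L i))"
  shows "(\<Pi>\<^sub>M i\<in>I. density (M i) (L i)) = density (\<Pi>\<^sub>M i\<in>I. M i) (\<lambda>x. \<Prod>i\<in>I. L i (x i))"
proof -
  interpret PM: product_prob_space M
    by (rule product_prob_spaceI) (rule M)
  interpret PLM: product_prob_space "\<lambda>i. density (M i) (L i)"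
    by (rule product_prob_spaceI) (rule LM)
  show ?thesis
  proof (rule PLM.PiM_eqI[symmetric, OF I])
    show "sets (density (\<Pi>\<^sub>M i\<in>I. M i) (\<lambda>x. \<Prod>i\<in>I. L i (x i))) = sets (\<Pi>\<^sub>M i\<in>I. density (M i) (L i))"
      by (auto intro!: sets_PiM_cong)
    fix A assume "\<And>i. i \<in> I \<Longrightarrow> A i \<in> sets (density (M i) (L i))"
    then have A: "\<And>i. i \<in> I \<Longrightarrow> A i \<in> sets (M i)"
      by simp
    then have "Pi\<^sub>E I A \<in> sets (\<Pi>\<^sub>M i\<in>I. M i)"
      by (intro sets_PiM_I_finite I) auto
    then have "emeasure (density (\<Pi>\<^sub>M i\<in>I. M i) (\<lambda>x. \<Prod>i\<in>I. L i (x i))) (Pi\<^sub>E I A)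
        = (\<integral>\<^sup>+x. (\<Prod>i\<in>I. L i (x i) * indicator (A i) (x i)) \<partial>(\<Pi>\<^sub>M i\<in>I. M i))"
      by (subst emeasure_density)
         (auto intro!: nn_integral_cong simp: space_PiM indicator_PiE_eq_prod I prod.distrib PiE_iff mult.commute)
    also have "\<dots> = (\<Prod>i\<in>I. \<integral>\<^sup>+x. L i x * indicator (A i) x \<partial>M i)"
      using A by (intro PM.product_nn_integral_prod I) auto
    also have "\<dots> = (\<Prod>i\<in>I. emeasure (density (M i) (L i)) (A i))"
      using A by (intro prod.cong refl) (simp add: emeasure_density)
    finally show "emeasure (density (\<Pi>\<^sub>M i\<in>I. M i) (\<lambda>x. \<Prod>i\<in>I. L i (x i))) (Pi\<^sub>E I A)
        = (\<Prod>i\<in>I. emeasure (density (M i) (L i)) (A i))" .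
  qed
qed

text \<open>Applied with \<open>L\<close> the likelihood ratio of a shifted model and \<open>Y\<close> a centred estimator,
  \<open>E[L Y]\<close> is the shift of the mean of the estimator.\<close>

lemma (in prob_space) Chapman_Robbins_inequality:
  fixes L Y :: "'a \<Rightarrow> real"
  assumes [measurable]: "L \<in> borel_measurable M" "Y \<in> borel_measurable M"
    and L2: "integrable M (\<lambda>x. L x ^ 2)" and L1: "expectation L = 1"
    and Y2: "integrable M (\<lambda>x. Y x ^ 2)" and Y0: "expectation Y = 0"
  shows "(expectation (\<lambda>x. L x * Y x)) ^ 2
    \<le> (expectation (\<lambda>x. L x ^ 2) - 1) * expectation (\<lambda>x. Y x ^ 2)"
proof -
  have L: "integrable M L" and Y: "integrable M Y"
    using L2 Y2 by (auto intro: square_integrable_imp_integrable)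
  have LY: "integrable M (\<lambda>x. L x * Y x)"
    by (rule square_integrable_imp_integrable_mult) (use L2 Y2 in auto)
  have "expectation (\<lambda>x. L x * Y x) = expectation (\<lambda>x. (L x - 1) * Y x)"
    using LY Y Y0 by (simp add: left_diff_distrib)
  also have "\<dots> ^ 2 \<le> expectation (\<lambda>x. (L x - 1) ^ 2) * expectation (\<lambda>x. Y x ^ 2)"
    using L2 Y2 by (intro Cauchy_Schwarz_integral) (auto simp: square_integrable_diff_const_iff)
  also have "expectation (\<lambda>x. (L x - 1) ^ 2) = expectation (\<lambda>x. L x ^ 2) - 1"
    using L2 L L1 by (simp add: power2_diff prob_space)
  finally show ?thesis .
qed

lemma inverse_le_of_exp_square_bound:
  fixes \<kappa> V :: real
  assumes \<kappa>: "\<kappa> > 0" and V: "V \<ge> 0"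
    and bound: "\<And>t. t \<noteq> 0 \<Longrightarrow> t ^ 2 \<le> (exp (\<kappa> * t ^ 2) - 1) * V"
  shows "1 / \<kappa> \<le> V"
proof (rule tendsto_lowerbound)
  show "((\<lambda>x. exp x * V) \<longlongrightarrow> V) (at_right 0)"
    by (auto intro!: tendsto_eq_intros)
  have "1 / \<kappa> \<le> exp x * V" if "0 < x" for x :: real
  proof -
    define t where "t = sqrt (x / \<kappa>)"
    have t: "t \<noteq> 0" "\<kappa> * t ^ 2 = x"
      using \<open>0 < x\<close> \<kappa> by (simp_all add: t_def)
    have "exp x - 1 \<le> x * exp x"
      using exp_ge_add_one_self[of "- x"] mult_right_mono[of "1 - x" "exp (- x)" "exp x"]
      by (simp add: algebra_simps exp_minus_inverse)
    then have "(exp x - 1) * V \<le> x * exp x * V"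
      using V by (rule mult_right_mono)
    moreover have "x / \<kappa> = t ^ 2"
      using t(2) \<kappa> by (simp add: field_simps)
    ultimately have "x * (1 / \<kappa>) \<le> x * (exp x * V)"
      using bound[OF t(1)] t(2) by simp
    then show ?thesis
      using \<open>0 < x\<close> by (rule mult_left_le_imp_le)
  qed
  then show "\<forall>\<^sub>F x in at_right 0. 1 / \<kappa> \<le> exp x * V"
    using eventually_at_right_less[of "0 :: real"] by (auto elim: eventually_mono)
qed simp

section \<open>Variance of the control variates estimator\<close>

locale valid_hdist =
  fixes D :: "('z, 'b) hdist_scheme"
  assumes valid: "valid_dist D"
begin

abbreviation "Z \<equiv> zlaw D"
abbreviation "K \<equiv> ylaw D"
abbreviation "g \<equiv> gmet D"
abbreviation "f \<equiv> human_metric D"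

sublocale Z: prob_space Z
  using valid by (simp add: valid_dist_def)

lemma measurable_g [measurable]: "g \<in> borel_measurable Z"
  and measurable_K [measurable]: "K \<in> measurable Z (subprob_algebra borel)"
  and expectation_g: "Z.expectation g = 0"
  and ennvar_g: "ennvar Z g = 1"
  using valid by (simp_all add: valid_dist_def)

lemma prob_space_K: "z \<in> space Z \<Longrightarrow> prob_space (K z)"
  and square_integrable_K: "z \<in> space Z \<Longrightarrow> integrable (K z) (\<lambda>y. y ^ 2)"
  using valid by (simp_all add: valid_dist_def)

lemma sets_K: "z \<in> space Z \<Longrightarrow> sets (K z) = sets borel"
  using measurable_K by (rule subprob_measurableD(2))

lemma measurable_f [measurable]: "f \<in> borel_measurable Z"
  unfolding human_metric_def[abs_def]
  by (rule measurable_compose[OF measurable_K integral_measurable_subprob_algebra]) simp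

lemma measurable_ennvar_K [measurable]: "(\<lambda>z. ennvar (K z) (\<lambda>y. y)) \<in> borel_measurable Z"
  unfolding ennvar_def human_metric_def[symmetric]
  by (rule nn_integral_measurable_subprob_algebra2[where N=borel]) auto

lemma nn_integral_square_deviation_K:
  assumes z: "z \<in> space Z"
  shows "(\<integral>\<^sup>+y. ennreal ((y - k) ^ 2) \<partial>K z) = ennvar (K z) (\<lambda>y. y) + ennreal ((f z - k) ^ 2)"
proof -
  interpret Kz: prob_space "K z"
    by (rule prob_space_K[OF z])
  have [measurable]: "(\<lambda>y. y) \<in> borel_measurable (K z)"
    by (simp add: measurable_cong_sets[OF sets_K[OF z] refl])
  have y2: "integrable (K z) (\<lambda>y. y ^ 2)"
    by (rule square_integrable_K[OF z])
  have y1: "integrable (K z) (\<lambda>y. y)"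
    by (rule Kz.square_integrable_imp_integrable[OF _ y2]) simp
  have mean: "Kz.expectation (\<lambda>y. y) = f z"
    by (simp add: human_metric_def)
  have "(\<integral>\<^sup>+y. ennreal ((y - k) ^ 2) \<partial>K z) = ennreal (\<integral>y. (y - k) ^ 2 \<partial>K z)"
    using y2 by (intro nn_integral_eq_integral) (auto simp: Kz.square_integrable_diff_const_iff)
  also have "(\<integral>y. (y - k) ^ 2 \<partial>K z) = (\<integral>y. (y - f z) ^ 2 + 2 * (f z - k) * (y - f z) + (f z - k) ^ 2 \<partial>K z)"
    by (rule Bochner_Integration.integral_cong) (auto simp: power2_eq_square algebra_simps)
  also have "\<dots> = Kz.variance (\<lambda>y. y) + (f z - k) ^ 2"
    using y1 y2 mean by (simp add: Kz.square_integrable_diff_const_iff Kz.prob_space)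
  finally show ?thesis
    using y2 by (simp add: Kz.ennvar_eq_variance ennreal_plus)
qed

lemma measurable_Pair_kernel [measurable]:
  "(\<lambda>z. distr (K z) (Z \<Otimes>\<^sub>M borel) (Pair z)) \<in> measurable Z (subprob_algebra (Z \<Otimes>\<^sub>M borel))"
  by (rule measurable_distr2[where f=Pair and M=borel]) (simp_all add: measurable_ident)

lemma measurable_Pair_K: "z \<in> space Z \<Longrightarrow> Pair z \<in> measurable (K z) (Z \<Otimes>\<^sub>M borel)"
  unfolding measurable_cong_sets[OF sets_K refl] by (rule measurable_Pair1')

lemma prob_space_joint_law: "prob_space (joint_law D)"
  unfolding joint_law_def
  by (rule Z.prob_space_bind[OF _ measurable_Pair_kernel])
     (auto intro!: AE_I2 prob_space.prob_space_distr prob_space_K measurable_Pair_K)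

lemma sets_joint_law [measurable_cong]: "sets (joint_law D) = sets (Z \<Otimes>\<^sub>M borel)"
  unfolding joint_law_def by (rule sets_bind) (auto simp: Z.not_empty)

lemma nn_integral_joint_law:
  assumes [measurable]: "F \<in> borel_measurable (Z \<Otimes>\<^sub>M borel)"
  shows "(\<integral>\<^sup>+x. F x \<partial>joint_law D) = (\<integral>\<^sup>+z. \<integral>\<^sup>+y. F (z, y) \<partial>K z \<partial>Z)"
  unfolding joint_law_def
  by (subst nn_integral_bind[OF _ measurable_Pair_kernel])
     (auto intro!: nn_integral_cong simp: nn_integral_distr[OF measurable_Pair_K])

end

locale hdist_in_class =
  fixes sf2 sa2 \<alpha> :: real and D :: "('z, 'b) hdist_scheme"
  assumes in_class: "in_class sf2 sa2 \<alpha> D" and sf2_nonneg: "sf2 \<ge> 0" and sa2_nonneg: "sa2 \<ge> 0"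
begin

sublocale valid_hdist D
  using in_class by unfold_locales (simp add: in_class_def)

abbreviation "\<mu> \<equiv> target D"

lemma ennvar_f: "ennvar Z f = ennreal sf2"
  and nn_integral_ennvar_K: "(\<integral>\<^sup>+ z. ennvar (K z) (\<lambda>y. y) \<partial>Z) = ennreal sa2"
  and integrable_covariance: "integrable Z (\<lambda>z. (f z - \<mu>) * g z)"
  and covariance: "Z.expectation (\<lambda>z. (f z - \<mu>) * g z) = \<alpha>"
  using in_class by (simp_all add: in_class_def expectation_g)

lemma expectation_f: "Z.expectation f = \<mu>"
  by (simp add: target_def)

lemma square_integrable_f: "integrable Z (\<lambda>z. f z ^ 2)"
  by (rule Z.ennvar_finite_imp_square_integrable) (simp_all add: ennvar_f)

lemma square_integrable_g: "integrable Z (\<lambda>z. g z ^ 2)"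
  by (rule Z.ennvar_finite_imp_square_integrable) (simp_all add: ennvar_g)

lemma variance_f: "Z.variance f = sf2"
  using Z.ennvar_eq_variance[OF measurable_f square_integrable_f] ennvar_f sf2_nonneg by simp

lemma expectation_g_squared: "Z.expectation (\<lambda>z. g z ^ 2) = 1"
  using Z.ennvar_eq_variance[OF measurable_g square_integrable_g] ennvar_g by (simp add: expectation_g)

text \<open>\<open>f - \<alpha> g\<close> is \<open>f\<close> minus its projection onto \<open>g\<close>, which has unit norm and
  covariance \<open>\<alpha>\<close> with \<open>f\<close>, so its variance is \<open>sf2 - \<alpha>\<^sup>2\<close>.\<close>

lemma integral_square_deviation_f_minus_g:
  "Z.expectation (\<lambda>z. (f z - \<alpha> * g z - c) ^ 2) = sf2 - \<alpha> ^ 2 + (\<mu> - c) ^ 2"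
proof -
  have f1: "integrable Z f"
    by (rule Z.square_integrable_imp_integrable[OF _ square_integrable_f]) simp
  have u1: "has_bochner_integral Z (\<lambda>z. f z - \<mu>) 0"
    using f1 by (simp add: has_bochner_integral_iff expectation_f Z.prob_space)
  have u2: "has_bochner_integral Z (\<lambda>z. (f z - \<mu>) ^ 2) sf2"
    using square_integrable_f variance_f
    by (simp add: has_bochner_integral_iff Z.square_integrable_diff_const_iff expectation_f)
  have ug: "has_bochner_integral Z (\<lambda>z. (f z - \<mu>) * g z) \<alpha>"
    using integrable_covariance covariance by (simp add: has_bochner_integral_iff)
  have g1: "has_bochner_integral Z g 0"
    using valid expectation_g by (simp add: has_bochner_integral_iff valid_dist_def)
  have g2: "has_bochner_integral Z (\<lambda>z. g z ^ 2) 1"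
    using square_integrable_g expectation_g_squared by (simp add: has_bochner_integral_iff)
  have "has_bochner_integral Z
      (\<lambda>z. (f z - \<mu>) ^ 2 - 2 * \<alpha> * ((f z - \<mu>) * g z) + \<alpha> ^ 2 * g z ^ 2
         + 2 * (\<mu> - c) * (f z - \<mu>) - 2 * \<alpha> * (\<mu> - c) * g z + (\<mu> - c) ^ 2)
      (sf2 - 2 * \<alpha> * \<alpha> + \<alpha> ^ 2 * 1 + 2 * (\<mu> - c) * 0 - 2 * \<alpha> * (\<mu> - c) * 0 + (\<mu> - c) ^ 2)"
    using Z.integrable_const[of "(\<mu> - c) ^ 2"]
    by (intro has_bochner_integral_add has_bochner_integral_diff has_bochner_integral_mult_right
          u1 u2 ug g1 g2) (simp_all add: has_bochner_integral_iff Z.prob_space)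
  moreover have "(f z - \<alpha> * g z - c) ^ 2 = (f z - \<mu>) ^ 2 - 2 * \<alpha> * ((f z - \<mu>) * g z) + \<alpha> ^ 2 * g z ^ 2
     + 2 * (\<mu> - c) * (f z - \<mu>) - 2 * \<alpha> * (\<mu> - c) * g z + (\<mu> - c) ^ 2" for z
    by (simp add: power2_eq_square algebra_simps)
  ultimately show ?thesis
    by (simp add: has_bochner_integral_iff power2_eq_square)
qed

lemma square_deviation_f_minus_g_nonneg: "0 \<le> sf2 - \<alpha> ^ 2 + (\<mu> - c) ^ 2"
  using integral_square_deviation_f_minus_g[of c] integral_nonneg_AE[of "\<lambda>z. (f z - \<alpha> * g z - c) ^ 2" Z]
  by simp

text \<open>Conditioning on \<open>z\<close> splits the squared deviation of the residual \<open>y - \<alpha> g z\<close>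
  into the judgment noise, of mean \<open>sa2\<close>, and the squared deviation of \<open>f - \<alpha> g\<close>.\<close>

lemma nn_integral_square_deviation_residual:
  "(\<integral>\<^sup>+x. ennreal ((snd x - \<alpha> * g (fst x) - c) ^ 2) \<partial>joint_law D)
     = ennreal (sa2 + (sf2 - \<alpha> ^ 2) + (\<mu> - c) ^ 2)"
proof -
  have "integrable Z (\<lambda>z. (f z - \<alpha> * g z - c) ^ 2)"
  proof -
    have "integrable Z (\<lambda>z. (f z + (- \<alpha>) * g z) ^ 2)"
      by (intro square_integrable_add)
         (auto simp: square_integrable_f square_integrable_g power_mult_distrib)
    then show ?thesis
      by (simp add: Z.square_integrable_diff_const_iff)
  qed
  then have "(\<integral>\<^sup>+z. ennreal ((f z - \<alpha> * g z - c) ^ 2) \<partial>Z) = ennreal (sf2 - \<alpha> ^ 2 + (\<mu> - c) ^ 2)"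
    using integral_square_deviation_f_minus_g by (subst nn_integral_eq_integral) auto
  moreover have "(\<integral>\<^sup>+x. ennreal ((snd x - \<alpha> * g (fst x) - c) ^ 2) \<partial>joint_law D)
      = (\<integral>\<^sup>+z. ennvar (K z) (\<lambda>y. y) + ennreal ((f z - \<alpha> * g z - c) ^ 2) \<partial>Z)"
    by (subst nn_integral_joint_law)
       (auto intro!: nn_integral_cong simp: diff_diff_eq nn_integral_square_deviation_K)
  ultimately show ?thesis
    using square_deviation_f_minus_g_nonneg sa2_nonneg by (simp add: nn_integral_add nn_integral_ennvar_K ennreal_plus add.assoc)
qed

lemma mean_variance_residual:
  defines "P \<equiv> \<lambda>x. snd x - \<alpha> * g (fst x)"
  shows "P \<in> borel_measurable (joint_law D)"
    and "integrable (joint_law D) (\<lambda>x. P x ^ 2)"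
    and "prob_space.expectation (joint_law D) P = \<mu>"
    and "prob_space.variance (joint_law D) P = sa2 + (sf2 - \<alpha> ^ 2)"
proof -
  interpret J: prob_space "joint_law D"
    by (rule prob_space_joint_law)
  show [measurable]: "P \<in> borel_measurable (joint_law D)"
    unfolding P_def measurable_cong_sets[OF sets_joint_law refl] by measurable
  have deviation: "has_bochner_integral (joint_law D) (\<lambda>x. (P x - c) ^ 2) (sa2 + (sf2 - \<alpha> ^ 2) + (\<mu> - c) ^ 2)" for c
    using nn_integral_square_deviation_residual[of c] sa2_nonneg square_deviation_f_minus_g_nonneg[of c]
    by (intro has_bochner_integral_nn_integral) (auto simp: P_def)
  show P2: "integrable (joint_law D) (\<lambda>x. P x ^ 2)"
    using deviation[of 0] by (simp add: has_bochner_integral_iff)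
  show "J.expectation P = \<mu>" and "J.variance P = sa2 + (sf2 - \<alpha> ^ 2)"
    using J.expectation_variance_from_square_deviations[OF _ P2] deviation
    by (auto simp: has_bochner_integral_iff)
qed

lemma ennvar_cv_est:
  assumes "n \<ge> 1"
  shows "ennvar (sample_space n D) (cv_est n \<alpha> D) = ennreal ((sa2 + (sf2 - \<alpha> ^ 2)) / real n)"
proof -
  interpret J: prob_space "joint_law D"
    by (rule prob_space_joint_law)
  have "cv_est n \<alpha> D = (\<lambda>\<omega>. (\<Sum>i<n. (\<lambda>x. snd x - \<alpha> * g (fst x)) (\<omega> i)) / real n)"
    by (simp add: cv_est_def fun_eq_iff)
  then show ?thesis
    using J.ennvar_sample_mean[OF mean_variance_residual(1,2) assms] mean_variance_residual(4)
    by (simp add: sample_space_def)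
qed

end

section \<open>A Gaussian subfamily of the class\<close>

definition gaussian :: "real \<Rightarrow> real measure" where
  "gaussian a = density lborel (normal_density a 1)"

lemma prob_space_gaussian: "prob_space (gaussian a)"
  unfolding gaussian_def by (rule prob_space_normal_density) simp

lemma sets_gaussian [measurable_cong, simp]: "sets (gaussian a) = sets borel"
  and space_gaussian [simp]: "space (gaussian a) = UNIV"
  by (simp_all add: gaussian_def)

lemma sigma_finite_gaussian: "sigma_finite_measure (gaussian a)"
  by (rule prob_space_imp_sigma_finite[OF prob_space_gaussian])

lemma has_bochner_integral_gaussian_moment:
  "has_bochner_integral (gaussian a) (\<lambda>x. x - a) 0"
  "has_bochner_integral (gaussian a) (\<lambda>x. (x - a) ^ 2) 1"
  using integrable_normal_moment[of 1 a 1] integral_normal_moment_odd[where \<mu>=a and \<sigma>=1 and k=0]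
    integrable_normal_moment[of 1 a 2] integral_normal_moment_even[of 1 a 1]
  by (simp_all add: gaussian_def has_bochner_integral_iff integrable_density integral_density)

lemma gaussian_eq_density: "gaussian a = density (gaussian 0) (\<lambda>x. exp (a * x - a ^ 2 / 2))"
proof -
  have "normal_density a 1 x = normal_density 0 1 x * exp (a * x - a ^ 2 / 2)" for x
    by (simp add: normal_density_def power2_eq_square field_simps flip: exp_add)
  then show ?thesis
    unfolding gaussian_def by (subst density_density_eq) (auto simp flip: ennreal_mult)
qed

definition rademacher :: "bool measure" where
  "rademacher = measure_pmf (bernoulli_pmf (1 / 2))"

definition bool_sign :: "bool \<Rightarrow> real" where
  "bool_sign s = (if s then 1 else -1)"

lemma prob_space_rademacher: "prob_space rademacher"
  unfolding rademacher_def by (rule prob_space_measure_pmf)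

lemma sets_rademacher [simp, measurable_cong]: "sets rademacher = UNIV"
  and space_rademacher [simp]: "space rademacher = UNIV"
  by (simp_all add: rademacher_def)

lemma has_bochner_integral_rademacher_sign: "has_bochner_integral rademacher bool_sign 0"
  unfolding rademacher_def
  by (simp add: has_bochner_integral_iff bool_sign_def integrable_measure_pmf_finite)

lemma bool_sign_squared [simp]: "bool_sign s ^ 2 = 1"
  by (simp add: bool_sign_def)

text \<open>A sign \<open>s\<close> and a real \<open>w\<close> are stored injectively in the single real input
  \<open>z = \<plusminus>exp w\<close>, since the class in the lower bound ranges over real inputs.\<close>

definition encode :: "bool \<times> real \<Rightarrow> real" where
  "encode x = (if fst x then exp (snd x) else - exp (snd x))"

definition sign_part :: "real \<Rightarrow> real" where
  "sign_part z = (if 0 < z then 1 else -1)"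

definition log_part :: "real \<Rightarrow> real" where
  "log_part z = ln \<bar>z\<bar>"

lemma sign_part_encode [simp]: "sign_part (encode x) = bool_sign (fst x)"
  and log_part_encode [simp]: "log_part (encode x) = snd x"
  by (simp_all add: sign_part_def log_part_def encode_def bool_sign_def)

lemma measurable_sign_part [measurable]: "sign_part \<in> borel_measurable borel"
  and measurable_log_part [measurable]: "log_part \<in> borel_measurable borel"
  unfolding sign_part_def log_part_def by measurable

lemma measurable_encode [measurable]: "encode \<in> measurable (count_space UNIV \<Otimes>\<^sub>M borel) borel"
proof (rule measurable_pair_measure_countable1)
  show "(\<lambda>y. encode (x, y)) \<in> borel_measurable borel" for x
    by (cases x) (simp_all add: encode_def)
qed simp

definition latent_law :: "real \<Rightarrow> (bool \<times> real) measure" where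
  "latent_law a = rademacher \<Otimes>\<^sub>M gaussian a"

definition input_law :: "real \<Rightarrow> real measure" where
  "input_law a = distr (latent_law a) borel encode"

lemma prob_space_latent_law: "prob_space (latent_law a)"
  unfolding latent_law_def by (intro prob_space_pair prob_space_rademacher prob_space_gaussian)

lemma sets_latent_law [measurable_cong]: "sets (latent_law a) = sets (count_space UNIV \<Otimes>\<^sub>M borel)"
  and space_latent_law [simp]: "space (latent_law a) = UNIV"
  unfolding latent_law_def by (auto intro!: sets_pair_measure_cong simp: space_pair_measure)

lemma prob_space_input_law: "prob_space (input_law a)"
  unfolding input_law_def by (intro prob_space.prob_space_distr prob_space_latent_law) simp

lemma sets_input_law [measurable_cong, simp]: "sets (input_law a) = sets borel"
  and space_input_law [simp]: "space (input_law a) = UNIV"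
  by (simp_all add: input_law_def)

lemma has_bochner_integral_input_law:
  fixes F :: "real \<Rightarrow> real" and G :: "bool \<times> real \<Rightarrow> real"
  assumes [measurable]: "F \<in> borel_measurable borel"
    and "has_bochner_integral (latent_law a) G x" and "\<And>y. F (encode y) = G y"
  shows "has_bochner_integral (input_law a) F x"
  using assms(2,3) unfolding input_law_def has_bochner_integral_iff
  by (simp add: integrable_distr_eq integral_distr)

lemma has_bochner_integral_latent_law:
  "has_bochner_integral (latent_law a) (\<lambda>x. bool_sign (fst x)) 0"
  "has_bochner_integral (latent_law a) (\<lambda>x. snd x - a) 0"
  "has_bochner_integral (latent_law a) (\<lambda>x. (snd x - a) ^ 2) 1"
  "has_bochner_integral (latent_law a) (\<lambda>x. bool_sign (fst x) * (snd x - a)) 0"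
proof -
  have pair: "has_bochner_integral (latent_law a) (\<lambda>x. F (fst x) * G (snd x)) (x * y)"
    if "has_bochner_integral rademacher F x" "has_bochner_integral (gaussian a) G y"
    for F :: "bool \<Rightarrow> real" and G :: "real \<Rightarrow> real" and x y
    using has_bochner_integral_pair_measure_mult[of rademacher "gaussian a" F G] that
      prob_space_imp_sigma_finite[OF prob_space_rademacher] sigma_finite_gaussian
    by (auto simp: has_bochner_integral_iff latent_law_def)
  note one = prob_space.has_bochner_integral_const[OF prob_space_rademacher, of 1]
    prob_space.has_bochner_integral_const[OF prob_space_gaussian, of a 1]
  show "has_bochner_integral (latent_law a) (\<lambda>x. bool_sign (fst x)) 0"
    using pair[OF has_bochner_integral_rademacher_sign one(2)] by simp
  show "has_bochner_integral (latent_law a) (\<lambda>x. snd x - a) 0"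
    using pair[OF one(1) has_bochner_integral_gaussian_moment(1)] by simp
  show "has_bochner_integral (latent_law a) (\<lambda>x. (snd x - a) ^ 2) 1"
    using pair[OF one(1) has_bochner_integral_gaussian_moment(2)] by simp
  show "has_bochner_integral (latent_law a) (\<lambda>x. bool_sign (fst x) * (snd x - a)) 0"
    using pair[OF has_bochner_integral_rademacher_sign has_bochner_integral_gaussian_moment(1)] by simp
qed

definition hard_metric :: "real \<Rightarrow> real \<Rightarrow> real \<Rightarrow> real" where
  "hard_metric \<alpha> c z = \<alpha> * sign_part z + c * log_part z"

definition judgment_law :: "real \<Rightarrow> real \<Rightarrow> real \<Rightarrow> real \<Rightarrow> real \<Rightarrow> real measure" where
  "judgment_law \<alpha> c v b z = distr (gaussian b) borel (\<lambda>e. hard_metric \<alpha> c z + sqrt v * e)"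

definition hard_dist :: "real \<Rightarrow> real \<Rightarrow> real \<Rightarrow> real \<Rightarrow> real \<Rightarrow> real hdist" where
  "hard_dist \<alpha> c v a b = \<lparr>zlaw = input_law a, gmet = sign_part, ylaw = judgment_law \<alpha> c v b\<rparr>"

lemma hard_dist_simps [simp]:
  "zlaw (hard_dist \<alpha> c v a b) = input_law a"
  "gmet (hard_dist \<alpha> c v a b) = sign_part"
  "ylaw (hard_dist \<alpha> c v a b) = judgment_law \<alpha> c v b"
  by (simp_all add: hard_dist_def)

lemma measurable_hard_metric [measurable]: "hard_metric \<alpha> c \<in> borel_measurable borel"
  unfolding hard_metric_def by measurable

lemma prob_space_judgment_law: "prob_space (judgment_law \<alpha> c v b z)"
  unfolding judgment_law_def by (intro prob_space.prob_space_distr prob_space_gaussian) simp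

lemma sets_judgment_law [measurable_cong, simp]: "sets (judgment_law \<alpha> c v b z) = sets borel"
  by (simp add: judgment_law_def)

lemma measurable_judgment_law: "judgment_law \<alpha> c v b \<in> measurable (input_law a) (subprob_algebra borel)"
  unfolding judgment_law_def[abs_def]
proof (rule measurable_distr2)
  show "(\<lambda>(z, e). hard_metric \<alpha> c z + sqrt v * e) \<in> borel_measurable (input_law a \<Otimes>\<^sub>M gaussian b)"
    by measurable
  show "(\<lambda>z. gaussian b) \<in> measurable (input_law a) (subprob_algebra (gaussian b))"
    by (rule measurable_const)
       (auto simp: space_subprob_algebra prob_space_imp_subprob_space prob_space_gaussian)
qed

lemma has_bochner_integral_judgment_law:
  "has_bochner_integral (judgment_law \<alpha> c v b z) (\<lambda>y. y) (hard_metric \<alpha> c z + sqrt v * b)"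
  "v \<ge> 0 \<Longrightarrow> has_bochner_integral (judgment_law \<alpha> c v b z)
     (\<lambda>y. (y - (hard_metric \<alpha> c z + sqrt v * b)) ^ 2) v"
proof -
  note moment = has_bochner_integral_gaussian_moment[of b]
  have "has_bochner_integral (gaussian b) (\<lambda>e. (hard_metric \<alpha> c z + sqrt v * b) + sqrt v * (e - b))
     ((hard_metric \<alpha> c z + sqrt v * b) + sqrt v * 0)"
    by (intro has_bochner_integral_add has_bochner_integral_mult_right moment
        prob_space.has_bochner_integral_const[OF prob_space_gaussian])
  then show "has_bochner_integral (judgment_law \<alpha> c v b z) (\<lambda>y. y) (hard_metric \<alpha> c z + sqrt v * b)"
    by (simp add: judgment_law_def has_bochner_integral_iff integrable_distr_eq integral_distr
        algebra_simps)
  assume "v \<ge> 0"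
  then have "(hard_metric \<alpha> c z + sqrt v * e - (hard_metric \<alpha> c z + sqrt v * b)) ^ 2 = v * (e - b) ^ 2" for e
    by (simp add: power_mult_distrib flip: right_diff_distrib)
  moreover have "has_bochner_integral (gaussian b) (\<lambda>e. v * (e - b) ^ 2) (v * 1)"
    by (intro has_bochner_integral_mult_right moment)
  ultimately show "has_bochner_integral (judgment_law \<alpha> c v b z)
     (\<lambda>y. (y - (hard_metric \<alpha> c z + sqrt v * b)) ^ 2) v"
    by (simp add: judgment_law_def has_bochner_integral_iff integrable_distr_eq integral_distr)
qed

lemma square_integrable_judgment_law:
  assumes "v \<ge> 0"
  shows "integrable (judgment_law \<alpha> c v b z) (\<lambda>y. y ^ 2)"
proof -
  interpret prob_space "judgment_law \<alpha> c v b z"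
    by (rule prob_space_judgment_law)
  show ?thesis
    using has_bochner_integral_judgment_law(2)[OF assms]
      square_integrable_diff_const_iff[of "\<lambda>y. y" "hard_metric \<alpha> c z + sqrt v * b"]
    by (simp add: has_bochner_integral_iff)
qed

lemma human_metric_hard_dist: "human_metric (hard_dist \<alpha> c v a b) z = hard_metric \<alpha> c z + sqrt v * b"
  using has_bochner_integral_judgment_law(1) by (simp add: human_metric_def has_bochner_integral_iff)

lemma human_metric_hard_dist_encode:
  "human_metric (hard_dist \<alpha> c v a b) (encode x)
     = \<alpha> * bool_sign (fst x) + c * (snd x - a) + (c * a + sqrt v * b)"
  by (simp add: human_metric_hard_dist hard_metric_def algebra_simps)

lemma measurable_human_metric_hard_dist [measurable]:
  "human_metric (hard_dist \<alpha> c v a b) \<in> borel_measurable borel"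
  unfolding human_metric_hard_dist[abs_def] by measurable

lemma has_bochner_integral_human_metric_hard_dist:
  "has_bochner_integral (input_law a) (human_metric (hard_dist \<alpha> c v a b)) (c * a + sqrt v * b)"
proof -
  have "has_bochner_integral (latent_law a)
      (\<lambda>x. \<alpha> * bool_sign (fst x) + c * (snd x - a) + (c * a + sqrt v * b))
      (\<alpha> * 0 + c * 0 + (c * a + sqrt v * b))"
    by (intro has_bochner_integral_add has_bochner_integral_mult_right has_bochner_integral_latent_law
        prob_space.has_bochner_integral_const[OF prob_space_latent_law])
  then show ?thesis
    by (intro has_bochner_integral_input_law) (simp_all add: human_metric_hard_dist_encode)
qed

lemma target_hard_dist: "target (hard_dist \<alpha> c v a b) = c * a + sqrt v * b"
  using has_bochner_integral_human_metric_hard_dist by (simp add: target_def has_bochner_integral_iff)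

lemma has_bochner_integral_sign_part: "has_bochner_integral (input_law a) sign_part 0"
  by (rule has_bochner_integral_input_law[OF _ has_bochner_integral_latent_law(1)]) simp_all

lemma ennvar_sign_part: "ennvar (input_law a) sign_part = 1"
proof -
  have "has_bochner_integral (input_law a) (\<lambda>z. (sign_part z - 0) ^ 2) 1"
    by (rule has_bochner_integral_input_law[OF _ prob_space.has_bochner_integral_const[OF prob_space_latent_law]])
       simp_all
  then show ?thesis
    using prob_space.ennvar_eqI[OF prob_space_input_law has_bochner_integral_sign_part] by simp
qed

lemma valid_dist_hard_dist:
  assumes "v \<ge> 0"
  shows "valid_dist (hard_dist \<alpha> c v a b)"
  unfolding valid_dist_def
  using prob_space_input_law measurable_judgment_law prob_space_judgment_law has_bochner_integral_sign_part
    ennvar_sign_part square_integrable_judgment_law[OF assms]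
  by (auto simp: has_bochner_integral_iff)

lemma hard_dist_in_class:
  assumes "v \<ge> 0"
  shows "in_class (\<alpha> ^ 2 + c ^ 2) v \<alpha> (hard_dist \<alpha> c v a b)"
proof -
  interpret Z: prob_space "input_law a"
    by (rule prob_space_input_law)
  note latent = has_bochner_integral_latent_law[of a]
  note const = prob_space.has_bochner_integral_const[OF prob_space_latent_law]
  define f where "f = human_metric (hard_dist \<alpha> c v a b)"
  have [measurable]: "f \<in> borel_measurable borel"
    by (simp add: f_def)
  have f_centred: "f (encode x) - (c * a + sqrt v * b) = \<alpha> * bool_sign (fst x) + c * (snd x - a)" for x
    by (simp add: f_def human_metric_hard_dist_encode)
  have "has_bochner_integral (input_law a) (\<lambda>z. (f z - (c * a + sqrt v * b)) ^ 2)
      (\<alpha> ^ 2 * 1 + 2 * \<alpha> * c * 0 + c ^ 2 * 1)"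
  proof (rule has_bochner_integral_input_law)
    show "has_bochner_integral (latent_law a)
      (\<lambda>x. \<alpha> ^ 2 * 1 + 2 * \<alpha> * c * (bool_sign (fst x) * (snd x - a)) + c ^ 2 * (snd x - a) ^ 2)
      (\<alpha> ^ 2 * 1 + 2 * \<alpha> * c * 0 + c ^ 2 * 1)"
      by (intro has_bochner_integral_add has_bochner_integral_mult_right latent const)
  qed (simp_all add: f_centred power2_sum power_mult_distrib)
  then have ennvar_f: "ennvar (input_law a) f = ennreal (\<alpha> ^ 2 + c ^ 2)"
    using Z.ennvar_eqI[OF has_bochner_integral_human_metric_hard_dist[of a \<alpha> c v b, folded f_def]] by simp
  have covariance: "has_bochner_integral (input_law a)
      (\<lambda>z. (f z - (c * a + sqrt v * b)) * (sign_part z - 0)) (\<alpha> * 1 + c * 0)"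
  proof (rule has_bochner_integral_input_law)
    show "has_bochner_integral (latent_law a) (\<lambda>x. \<alpha> * 1 + c * (bool_sign (fst x) * (snd x - a))) (\<alpha> * 1 + c * 0)"
      by (intro has_bochner_integral_add has_bochner_integral_mult_right latent const)
  qed (simp, unfold f_centred, simp add: algebra_simps flip: power2_eq_square)
  have "(\<integral>\<^sup>+ z. ennvar (judgment_law \<alpha> c v b z) (\<lambda>y. y) \<partial>input_law a) = ennreal v"
    using prob_space.ennvar_eqI[OF prob_space_judgment_law has_bochner_integral_judgment_law] assms
    by (simp add: Z.emeasure_space_1[simplified])
  then show ?thesis
    using valid_dist_hard_dist[OF assms] ennvar_f covariance has_bochner_integral_sign_part
    unfolding in_class_def f_def by (simp add: has_bochner_integral_iff target_hard_dist)
qed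

section \<open>The lower bound for unbiased estimators\<close>

text \<open>One latent sample of a hard distribution: the latent input \<open>(s, w)\<close> and the noise \<open>e\<close>.
  The shift \<open>(a, b)\<close> acts only on the Gaussian coordinates, hence by a density.\<close>

definition latent_sample_law :: "real \<Rightarrow> real \<Rightarrow> ((bool \<times> real) \<times> real) measure" where
  "latent_sample_law a b = latent_law a \<Otimes>\<^sub>M gaussian b"

definition likelihood_ratio :: "real \<Rightarrow> real \<Rightarrow> (bool \<times> real) \<times> real \<Rightarrow> real" where
  "likelihood_ratio a b p = exp (a * snd (fst p) - a ^ 2 / 2) * exp (b * snd p - b ^ 2 / 2)"

lemma prob_space_latent_sample_law: "prob_space (latent_sample_law a b)"
  unfolding latent_sample_law_def by (intro prob_space_pair prob_space_latent_law prob_space_gaussian)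

lemma sets_latent_sample_law [measurable_cong]:
  "sets (latent_sample_law a b) = sets ((count_space UNIV \<Otimes>\<^sub>M borel) \<Otimes>\<^sub>M borel)"
  unfolding latent_sample_law_def by (intro sets_pair_measure_cong sets_latent_law) simp

lemma space_latent_sample_law [simp]: "space (latent_sample_law a b) = UNIV"
  by (simp add: latent_sample_law_def space_pair_measure)

lemma measurable_likelihood_ratio [measurable]:
  "likelihood_ratio a b \<in> borel_measurable (latent_sample_law a' b')"
  unfolding measurable_cong_sets[OF sets_latent_sample_law refl] likelihood_ratio_def by measurable

lemma likelihood_ratio_nonneg: "likelihood_ratio a b p \<ge> 0"
  by (simp add: likelihood_ratio_def)

lemma latent_law_eq_density:
  "latent_law a = density (latent_law 0) (\<lambda>x. exp (a * snd x - a ^ 2 / 2))"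
proof -
  have "latent_law a = density rademacher (\<lambda>_. 1) \<Otimes>\<^sub>M density (gaussian 0) (\<lambda>x. exp (a * x - a ^ 2 / 2))"
    unfolding latent_law_def by (simp add: density_1 flip: gaussian_eq_density)
  also have "\<dots> = density (latent_law 0) (\<lambda>x. exp (a * snd x - a ^ 2 / 2))"
    unfolding latent_law_def
    by (subst pair_measure_density)
       (auto simp: sigma_finite_gaussian case_prod_beta' simp flip: gaussian_eq_density)
  finally show ?thesis .
qed

lemma latent_sample_law_eq_density:
  "latent_sample_law a b = density (latent_sample_law 0 0) (likelihood_ratio a b)"
proof -
  have "latent_sample_law a b = density (latent_law 0) (\<lambda>x. exp (a * snd x - a ^ 2 / 2))
      \<Otimes>\<^sub>M density (gaussian 0) (\<lambda>x. exp (b * x - b ^ 2 / 2))"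
    unfolding latent_sample_law_def by (simp flip: gaussian_eq_density latent_law_eq_density)
  also have "\<dots> = density (latent_sample_law 0 0) (likelihood_ratio a b)"
    unfolding latent_sample_law_def likelihood_ratio_def
    by (subst pair_measure_density)
       (auto simp: sigma_finite_gaussian case_prod_beta' ennreal_mult simp flip: gaussian_eq_density)
  finally show ?thesis .
qed

lemma nn_integral_likelihood_ratio:
  "(\<integral>\<^sup>+p. likelihood_ratio a b p \<partial>latent_sample_law 0 0) = 1"
proof -
  interpret prob_space "latent_sample_law a b"
    by (rule prob_space_latent_sample_law)
  have "(\<integral>\<^sup>+p. likelihood_ratio a b p \<partial>latent_sample_law 0 0) = emeasure (latent_sample_law a b) (space (latent_sample_law a b))"
    unfolding latent_sample_law_eq_density[of a b] using sets.top[of "latent_sample_law 0 0"]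
    by (subst emeasure_density) (auto intro!: nn_integral_cong)
  then show ?thesis
    using emeasure_space_1 by simp
qed

lemma nn_integral_likelihood_ratio_squared:
  "(\<integral>\<^sup>+p. ennreal (likelihood_ratio a b p ^ 2) \<partial>latent_sample_law 0 0) = exp (a ^ 2 + b ^ 2)"
proof -
  have "likelihood_ratio a b p ^ 2 = exp (a ^ 2 + b ^ 2) * likelihood_ratio (2 * a) (2 * b) p" for p
    unfolding likelihood_ratio_def
    by (simp add: power_mult_distrib power2_eq_square algebra_simps flip: exp_add)
  then show ?thesis
    by (simp add: ennreal_mult nn_integral_cmult nn_integral_likelihood_ratio likelihood_ratio_nonneg)
qed

definition observe :: "real \<Rightarrow> real \<Rightarrow> real \<Rightarrow> (bool \<times> real) \<times> real \<Rightarrow> real \<times> real" where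
  "observe \<alpha> c v p = (encode (fst p), hard_metric \<alpha> c (encode (fst p)) + sqrt v * snd p)"

lemma measurable_observe [measurable]:
  "observe \<alpha> c v \<in> measurable (latent_sample_law a b) (input_law a' \<Otimes>\<^sub>M gaussian b')"
proof -
  have "sets (input_law a' \<Otimes>\<^sub>M gaussian b') = sets (borel \<Otimes>\<^sub>M borel)"
    by (intro sets_pair_measure_cong) auto
  then show ?thesis
    unfolding measurable_cong_sets[OF sets_latent_sample_law] observe_def by measurable
qed

text \<open>The factor \<open>gaussian 0\<close> only supplies the Borel sets of the judgment coordinate.\<close>

lemma joint_law_hard_dist:
  assumes "v \<ge> 0"
  shows "joint_law (hard_dist \<alpha> c v a b) = distr (latent_sample_law a b) (input_law a \<Otimes>\<^sub>M gaussian 0) (observe \<alpha> c v)"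
proof -
  interpret valid_hdist "hard_dist \<alpha> c v a b"
    using valid_dist_hard_dist[OF assms] by unfold_locales
  interpret gaussian: sigma_finite_measure "gaussian b"
    by (rule sigma_finite_gaussian)
  have sets_eq: "sets (input_law a \<Otimes>\<^sub>M gaussian 0) = sets (input_law a \<Otimes>\<^sub>M borel)"
    by (intro sets_pair_measure_cong) auto
  show ?thesis
  proof (rule measure_eqI)
    show "sets (joint_law (hard_dist \<alpha> c v a b)) = sets (distr (latent_sample_law a b) (input_law a \<Otimes>\<^sub>M gaussian 0) (observe \<alpha> c v))"
      using sets_joint_law sets_eq by simp
    fix A assume A_joint: "A \<in> sets (joint_law (hard_dist \<alpha> c v a b))"
    then have A [measurable]: "A \<in> sets (input_law a \<Otimes>\<^sub>M borel)"
      using sets_joint_law by simp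
    have [measurable]: "(\<lambda>(z, e). indicator A (z, hard_metric \<alpha> c z + sqrt v * e) :: ennreal)
        \<in> borel_measurable (borel \<Otimes>\<^sub>M gaussian b)"
      by (simp add: measurable_cong_sets[OF sets_pair_measure_cong[OF sets_input_law refl] refl])
    have "emeasure (joint_law (hard_dist \<alpha> c v a b)) A = (\<integral>\<^sup>+x. indicator A x \<partial>joint_law (hard_dist \<alpha> c v a b))"
      using A_joint by simp
    also have "\<dots> = (\<integral>\<^sup>+z. \<integral>\<^sup>+y. indicator A (z, y) \<partial>judgment_law \<alpha> c v b z \<partial>input_law a)"
      by (subst nn_integral_joint_law) simp_all
    also have "\<dots> = (\<integral>\<^sup>+z. \<integral>\<^sup>+e. indicator A (z, hard_metric \<alpha> c z + sqrt v * e) \<partial>gaussian b \<partial>input_law a)"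
      unfolding judgment_law_def by (intro nn_integral_cong) (simp add: nn_integral_distr)
    also have "\<dots> = (\<integral>\<^sup>+x. \<integral>\<^sup>+e. indicator A (encode x, hard_metric \<alpha> c (encode x) + sqrt v * e)
        \<partial>gaussian b \<partial>latent_law a)"
      unfolding input_law_def
      by (intro nn_integral_distr gaussian.borel_measurable_nn_integral_fst[
            where f="\<lambda>(z, e). indicator A (z, hard_metric \<alpha> c z + sqrt v * e)", simplified]) simp_all
    also have "\<dots> = (\<integral>\<^sup>+p. indicator A (observe \<alpha> c v p) \<partial>latent_sample_law a b)"
      unfolding latent_sample_law_def observe_def
      by (subst gaussian.nn_integral_fst[symmetric])
         (simp_all add: measurable_cong_sets[OF sets_pair_measure_cong[OF sets_input_law refl] refl])
    also have "\<dots> = (\<integral>\<^sup>+x. indicator A x \<partial>distr (latent_sample_law a b) (input_law a \<Otimes>\<^sub>M gaussian 0) (observe \<alpha> c v))"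
      using A sets_eq by (subst nn_integral_distr) auto
    also have "\<dots> = emeasure (distr (latent_sample_law a b) (input_law a \<Otimes>\<^sub>M gaussian 0) (observe \<alpha> c v)) A"
      using A sets_eq by (intro nn_integral_indicator) simp
    finally show "emeasure (joint_law (hard_dist \<alpha> c v a b)) A
        = emeasure (distr (latent_sample_law a b) (input_law a \<Otimes>\<^sub>M gaussian 0) (observe \<alpha> c v)) A" .
  qed
qed

definition latent_sample_space :: "nat \<Rightarrow> (nat \<Rightarrow> (bool \<times> real) \<times> real) measure" where
  "latent_sample_space n = (\<Pi>\<^sub>M i\<in>{..<n}. latent_sample_law 0 0)"

definition sample_likelihood_ratio :: "nat \<Rightarrow> real \<Rightarrow> real \<Rightarrow> (nat \<Rightarrow> (bool \<times> real) \<times> real) \<Rightarrow> real" where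
  "sample_likelihood_ratio n a b \<omega> = (\<Prod>i<n. likelihood_ratio a b (\<omega> i))"

lemma prob_space_latent_sample_space: "prob_space (latent_sample_space n)"
  unfolding latent_sample_space_def by (rule prob_space_PiM) (rule prob_space_latent_sample_law)

lemma measurable_sample_likelihood_ratio [measurable]:
  "sample_likelihood_ratio n a b \<in> borel_measurable (latent_sample_space n)"
  unfolding sample_likelihood_ratio_def[abs_def] latent_sample_space_def by measurable

lemma sample_likelihood_ratio_nonneg: "sample_likelihood_ratio n a b \<omega> \<ge> 0"
  unfolding sample_likelihood_ratio_def by (intro prod_nonneg) (simp add: likelihood_ratio_nonneg)

lemma PiM_latent_sample_law_eq_density:
  "(\<Pi>\<^sub>M i\<in>{..<n}. latent_sample_law a b) = density (latent_sample_space n) (sample_likelihood_ratio n a b)"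
proof -
  have "(\<Pi>\<^sub>M i\<in>{..<n}. latent_sample_law a b)
      = (\<Pi>\<^sub>M i\<in>{..<n}. density (latent_sample_law 0 0) (likelihood_ratio a b))"
    by (simp flip: latent_sample_law_eq_density)
  also have "\<dots> = density (latent_sample_space n) (\<lambda>\<omega>. \<Prod>i<n. ennreal (likelihood_ratio a b (\<omega> i)))"
    unfolding latent_sample_space_def
    by (rule PiM_density) (auto intro: prob_space_latent_sample_law simp flip: latent_sample_law_eq_density)
  finally show ?thesis
    by (simp add: sample_likelihood_ratio_def prod_ennreal likelihood_ratio_nonneg)
qed

lemma sample_likelihood_ratio_moments:
  "has_bochner_integral (latent_sample_space n) (sample_likelihood_ratio n a b) 1"
  "has_bochner_integral (latent_sample_space n) (\<lambda>\<omega>. sample_likelihood_ratio n a b \<omega> ^ 2)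
     (exp (real n * (a ^ 2 + b ^ 2)))"
proof -
  interpret product_prob_space "\<lambda>_ :: nat. latent_sample_law 0 0"
    by (rule product_prob_spaceI) (rule prob_space_latent_sample_law)
  have "(\<integral>\<^sup>+\<omega>. sample_likelihood_ratio n a b \<omega> \<partial>latent_sample_space n)
      = (\<Prod>i<n. \<integral>\<^sup>+p. likelihood_ratio a b p \<partial>latent_sample_law 0 0)"
    unfolding sample_likelihood_ratio_def latent_sample_space_def
    by (subst product_nn_integral_prod[symmetric]) (auto simp: prod_ennreal likelihood_ratio_nonneg)
  then show "has_bochner_integral (latent_sample_space n) (sample_likelihood_ratio n a b) 1"
    by (intro has_bochner_integral_nn_integral)
       (simp_all add: nn_integral_likelihood_ratio sample_likelihood_ratio_nonneg)
  have "(\<integral>\<^sup>+\<omega>. ennreal (sample_likelihood_ratio n a b \<omega> ^ 2) \<partial>latent_sample_space n)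
      = (\<Prod>i<n. \<integral>\<^sup>+p. ennreal (likelihood_ratio a b p ^ 2) \<partial>latent_sample_law 0 0)"
    unfolding sample_likelihood_ratio_def latent_sample_space_def
    by (subst product_nn_integral_prod[symmetric]) (auto simp: prod_ennreal prod_power_distrib)
  also have "\<dots> = ennreal (exp (real n * (a ^ 2 + b ^ 2)))"
    by (simp add: nn_integral_likelihood_ratio_squared ennreal_power exp_of_nat_mult)
  finally show "has_bochner_integral (latent_sample_space n) (\<lambda>\<omega>. sample_likelihood_ratio n a b \<omega> ^ 2)
     (exp (real n * (a ^ 2 + b ^ 2)))"
    by (intro has_bochner_integral_nn_integral) simp_all
qed

definition hard_estimator :: "nat \<Rightarrow> ((nat \<Rightarrow> real \<times> real) \<Rightarrow> real) \<Rightarrow> (nat \<Rightarrow> real \<times> real) \<Rightarrow> real" where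
  "hard_estimator n h \<omega> = h (\<lambda>i\<in>{..<n}. (snd (\<omega> i), sign_part (fst (\<omega> i))))"

definition latent_estimator ::
    "nat \<Rightarrow> real \<Rightarrow> real \<Rightarrow> real \<Rightarrow> ((nat \<Rightarrow> real \<times> real) \<Rightarrow> real) \<Rightarrow> (nat \<Rightarrow> (bool \<times> real) \<times> real) \<Rightarrow> real" where
  "latent_estimator n \<alpha> c v h \<omega> = hard_estimator n h (compose {..<n} (observe \<alpha> c v) \<omega>)"

lemma obs_hard_dist: "(\<lambda>\<omega>. h (obs n (hard_dist \<alpha> c v a b) \<omega>)) = hard_estimator n h"
  by (simp add: obs_def hard_estimator_def fun_eq_iff)

lemma measurable_hard_estimator:
  assumes "h \<in> borel_measurable (\<Pi>\<^sub>M i\<in>{..<n}. (borel :: (real \<times> real) measure))"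
  shows "hard_estimator n h \<in> borel_measurable (\<Pi>\<^sub>M i\<in>{..<n}. input_law a \<Otimes>\<^sub>M gaussian b)"
  unfolding hard_estimator_def[abs_def]
proof (rule measurable_compose[OF measurable_restrict assms])
  fix i assume "i \<in> {..<n}"
  then have "(\<lambda>\<omega>. (snd (\<omega> i), sign_part (fst (\<omega> i))))
      \<in> measurable (\<Pi>\<^sub>M i\<in>{..<n}. input_law a \<Otimes>\<^sub>M gaussian b) (borel \<Otimes>\<^sub>M borel)"
    by measurable
  then show "(\<lambda>\<omega>. (snd (\<omega> i), sign_part (fst (\<omega> i))))
      \<in> measurable (\<Pi>\<^sub>M i\<in>{..<n}. input_law a \<Otimes>\<^sub>M gaussian b) borel"
    by (simp add: borel_prod)
qed

lemma measurable_compose_observe: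
  "compose {..<n} (observe \<alpha> c v) \<in> measurable (\<Pi>\<^sub>M i\<in>{..<n}. latent_sample_law a' b') (\<Pi>\<^sub>M i\<in>{..<n}. input_law a \<Otimes>\<^sub>M gaussian b)"
  unfolding compose_def by (rule measurable_restrict) auto

lemma measurable_latent_estimator:
  assumes "h \<in> borel_measurable (\<Pi>\<^sub>M i\<in>{..<n}. (borel :: (real \<times> real) measure))"
  shows "latent_estimator n \<alpha> c v h \<in> borel_measurable (latent_sample_space n)"
  unfolding latent_estimator_def[abs_def] latent_sample_space_def
  by (rule measurable_compose[OF measurable_compose_observe measurable_hard_estimator[OF assms]])

lemma sample_space_hard_dist:
  assumes "v \<ge> 0"
  shows "sample_space n (hard_dist \<alpha> c v a b)
    = distr (\<Pi>\<^sub>M i\<in>{..<n}. latent_sample_law a b) (\<Pi>\<^sub>M i\<in>{..<n}. input_law a \<Otimes>\<^sub>M gaussian 0) (compose {..<n} (observe \<alpha> c v))"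
  unfolding sample_space_def joint_law_hard_dist[OF assms]
  by (rule distr_PiM_finite_prob_space'[symmetric])
     (auto intro: prob_space_latent_sample_law prob_space_pair prob_space_input_law prob_space_gaussian)

text \<open>Estimators of the hard distributions, pulled back to the common latent sample space,
  where a shift of the parameters is a change of density.\<close>

lemma integral_hard_estimator:
  assumes "v \<ge> 0"
    and h: "h \<in> borel_measurable (\<Pi>\<^sub>M i\<in>{..<n}. (borel :: (real \<times> real) measure))"
  shows "(\<integral>\<omega>. hard_estimator n h \<omega> \<partial>sample_space n (hard_dist \<alpha> c v a b))
    = (\<integral>\<omega>. sample_likelihood_ratio n a b \<omega> * latent_estimator n \<alpha> c v h \<omega> \<partial>latent_sample_space n)"
  unfolding sample_space_hard_dist[OF assms(1)]
  using measurable_latent_estimator[OF h, of \<alpha> c v, unfolded latent_estimator_def[abs_def]]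
  by (subst integral_distr[OF measurable_compose_observe measurable_hard_estimator[OF h]],
      subst PiM_latent_sample_law_eq_density, subst integral_density)
     (auto simp: latent_estimator_def sample_likelihood_ratio_nonneg)

lemma hard_estimator_at_origin:
  assumes "v \<ge> 0"
    and h: "h \<in> borel_measurable (\<Pi>\<^sub>M i\<in>{..<n}. (borel :: (real \<times> real) measure))"
  shows "ennvar (sample_space n (hard_dist \<alpha> c v 0 0)) (hard_estimator n h)
      = ennvar (latent_sample_space n) (latent_estimator n \<alpha> c v h)"
    and "(\<integral>\<omega>. hard_estimator n h \<omega> \<partial>sample_space n (hard_dist \<alpha> c v 0 0))
      = (\<integral>\<omega>. latent_estimator n \<alpha> c v h \<omega> \<partial>latent_sample_space n)"
proof -
  have sample_space: "sample_space n (hard_dist \<alpha> c v 0 0)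
      = distr (latent_sample_space n) (\<Pi>\<^sub>M i\<in>{..<n}. input_law 0 \<Otimes>\<^sub>M gaussian 0) (compose {..<n} (observe \<alpha> c v))"
    unfolding sample_space_hard_dist[OF assms(1)] latent_sample_space_def ..
  note observe = measurable_compose_observe[of n \<alpha> c v 0 0, folded latent_sample_space_def]
  have [measurable]: "hard_estimator n h \<in> borel_measurable (\<Pi>\<^sub>M i\<in>{..<n}. input_law 0 \<Otimes>\<^sub>M gaussian 0)"
    by (rule measurable_hard_estimator[OF h])
  show mean: "(\<integral>\<omega>. hard_estimator n h \<omega> \<partial>sample_space n (hard_dist \<alpha> c v 0 0))
      = (\<integral>\<omega>. latent_estimator n \<alpha> c v h \<omega> \<partial>latent_sample_space n)"
    unfolding sample_space by (subst integral_distr[OF observe]) (simp_all add: latent_estimator_def[abs_def])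
  show "ennvar (sample_space n (hard_dist \<alpha> c v 0 0)) (hard_estimator n h)
      = ennvar (latent_sample_space n) (latent_estimator n \<alpha> c v h)"
    unfolding ennvar_def mean unfolding sample_space
    by (subst nn_integral_distr[OF observe]) (simp_all add: latent_estimator_def[abs_def])
qed

lemma Chapman_Robbins_hard_estimator:
  fixes h :: "(nat \<Rightarrow> real \<times> real) \<Rightarrow> real"
  assumes v: "v \<ge> 0" and s: "c ^ 2 + v > 0"
    and h: "h \<in> borel_measurable (\<Pi>\<^sub>M i\<in>{..<n}. (borel :: (real \<times> real) measure))"
    and unbiased: "\<And>a b. (\<integral>\<omega>. hard_estimator n h \<omega> \<partial>sample_space n (hard_dist \<alpha> c v a b))
      = target (hard_dist \<alpha> c v a b)"
    and Y2: "integrable (latent_sample_space n) (\<lambda>\<omega>. latent_estimator n \<alpha> c v h \<omega> ^ 2)"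
  shows "t ^ 2 \<le> (exp (real n / (c ^ 2 + v) * t ^ 2) - 1)
    * prob_space.expectation (latent_sample_space n) (\<lambda>\<omega>. latent_estimator n \<alpha> c v h \<omega> ^ 2)"
proof -
  interpret \<Omega>: prob_space "latent_sample_space n"
    by (rule prob_space_latent_sample_space)
  define a b where "a = c * t / (c ^ 2 + v)" and "b = sqrt v * t / (c ^ 2 + v)"
  have "c * a + sqrt v * b = (c ^ 2 + v) * t / (c ^ 2 + v)"
    using v by (simp add: a_def b_def power2_eq_square add_divide_distrib algebra_simps)
  also have "\<dots> = t"
    using s by simp
  finally have "c * a + sqrt v * b = t" .
  then have shift: "\<Omega>.expectation (\<lambda>\<omega>. sample_likelihood_ratio n a b \<omega> * latent_estimator n \<alpha> c v h \<omega>) = t"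
    using integral_hard_estimator[OF v h, of \<alpha> c a b] unbiased[of a b] by (simp add: target_hard_dist)
  have "\<Omega>.expectation (latent_estimator n \<alpha> c v h) = 0"
    using hard_estimator_at_origin(2)[OF v h] unbiased[of 0 0] by (simp add: target_hard_dist)
  note bound = \<Omega>.Chapman_Robbins_inequality[OF _ _ _ _ Y2 this, of "sample_likelihood_ratio n a b"]
  have "a ^ 2 + b ^ 2 = (c ^ 2 + sqrt v ^ 2) * t ^ 2 / (c ^ 2 + v) ^ 2"
    by (simp add: a_def b_def power_divide power_mult_distrib add_divide_distrib algebra_simps)
  then have "real n * (a ^ 2 + b ^ 2) = real n / (c ^ 2 + v) * t ^ 2"
    using v by (simp add: power2_eq_square)
  then show ?thesis
    using bound shift sample_likelihood_ratio_moments[of n a b] measurable_latent_estimator[OF h]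
    by (simp add: has_bochner_integral_iff)
qed

lemma ennvar_unbiased_hard_estimator_ge:
  fixes h :: "(nat \<Rightarrow> real \<times> real) \<Rightarrow> real"
  assumes v: "v \<ge> 0" and n: "n \<ge> 1"
    and h: "h \<in> borel_measurable (\<Pi>\<^sub>M i\<in>{..<n}. (borel :: (real \<times> real) measure))"
    and unbiased: "\<And>a b. (\<integral>\<omega>. hard_estimator n h \<omega> \<partial>sample_space n (hard_dist \<alpha> c v a b))
      = target (hard_dist \<alpha> c v a b)"
  shows "ennreal ((c ^ 2 + v) / real n) \<le> ennvar (sample_space n (hard_dist \<alpha> c v 0 0)) (hard_estimator n h)"
proof (cases "c ^ 2 + v = 0 \<or> ennvar (latent_sample_space n) (latent_estimator n \<alpha> c v h) = \<infinity>")
  case True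
  then show ?thesis
    by (auto simp: hard_estimator_at_origin(1)[OF v h])
next
  case False
  interpret \<Omega>: prob_space "latent_sample_space n"
    by (rule prob_space_latent_sample_space)
  define Y where "Y = latent_estimator n \<alpha> c v h"
  have s: "c ^ 2 + v > 0"
    using False v by (simp add: add_nonneg_pos order_less_le)
  have Y_measurable: "Y \<in> borel_measurable (latent_sample_space n)"
    unfolding Y_def by (rule measurable_latent_estimator[OF h])
  have Y2: "integrable (latent_sample_space n) (\<lambda>\<omega>. Y \<omega> ^ 2)"
    using False unfolding Y_def
    by (intro \<Omega>.ennvar_finite_imp_square_integrable measurable_latent_estimator[OF h]) simp
  have Y0: "\<Omega>.expectation Y = 0"
    using hard_estimator_at_origin(2)[OF v h] unbiased[of 0 0] by (simp add: Y_def target_hard_dist)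
  have "1 / (real n / (c ^ 2 + v)) \<le> \<Omega>.expectation (\<lambda>\<omega>. Y \<omega> ^ 2)"
    using n s Chapman_Robbins_hard_estimator[OF v s h unbiased Y2[unfolded Y_def]]
    by (intro inverse_le_of_exp_square_bound) (auto simp: Y_def)
  moreover have "ennvar (latent_sample_space n) Y = ennreal (\<Omega>.expectation (\<lambda>\<omega>. Y \<omega> ^ 2))"
    using \<Omega>.ennvar_eq_variance[OF Y_measurable Y2] Y0 by simp
  ultimately show ?thesis
    using hard_estimator_at_origin(1)[OF v h] by (simp add: Y_def ennreal_leI)
qed

lemma hard_dist_mem_dist_class:
  assumes "\<alpha> ^ 2 \<le> sf2" and "v \<ge> 0"
  shows "hard_dist \<alpha> (sqrt (sf2 - \<alpha> ^ 2)) v a b \<in> dist_class sf2 v \<alpha>"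
  using hard_dist_in_class[OF assms(2), of \<alpha> "sqrt (sf2 - \<alpha> ^ 2)" a b] assms(1)
  by (simp add: dist_class_def)

lemma ennvar_cv_est_dist_class:
  fixes D :: "'z hdist"
  assumes "D \<in> dist_class sf2 sa2 \<alpha>" and "sf2 \<ge> 0" and "sa2 \<ge> 0" and "n \<ge> 1"
  shows "ennvar (sample_space n D) (cv_est n \<alpha> D) = ennreal ((sa2 + (sf2 - \<alpha> ^ 2)) / real n)"
proof -
  interpret hdist_in_class sf2 sa2 \<alpha> D
    using assms(1-3) by unfold_locales (simp_all add: dist_class_def)
  show ?thesis
    by (rule ennvar_cv_est[OF assms(4)])
qed

lemma SUP_ennvar_cv_est:
  assumes "\<alpha> ^ 2 \<le> sf2" and "sa2 \<ge> 0" and "n \<ge> 1"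
  shows "(SUP D \<in> (dist_class sf2 sa2 \<alpha> :: real hdist set). ennvar (sample_space n D) (cv_est n \<alpha> D))
    = ennreal ((sa2 + (sf2 - \<alpha> ^ 2)) / real n)"
proof -
  have "(dist_class sf2 sa2 \<alpha> :: real hdist set) \<noteq> {}"
    using hard_dist_mem_dist_class[OF assms(1,2)] by blast
  moreover have "sf2 \<ge> 0"
    using assms(1) order_trans[OF zero_le_power2] by blast
  ultimately show ?thesis
    using assms(2,3) by (simp add: ennvar_cv_est_dist_class)
qed

lemma SUP_ennvar_unbiased_ge:
  fixes h :: "(nat \<Rightarrow> real \<times> real) \<Rightarrow> real"
  assumes "\<alpha> ^ 2 \<le> sf2" and "sa2 \<ge> 0" and "n \<ge> 1"
    and h: "h \<in> borel_measurable (\<Pi>\<^sub>M i\<in>{..<n}. (borel :: (real \<times> real) measure))"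
    and unbiased: "\<And>D. D \<in> (dist_class sf2 sa2 \<alpha> :: real hdist set) \<Longrightarrow>
      (\<integral>\<omega>. h (obs n D \<omega>) \<partial>sample_space n D) = target D"
  shows "ennreal ((sa2 + (sf2 - \<alpha> ^ 2)) / real n)
    \<le> (SUP D \<in> (dist_class sf2 sa2 \<alpha> :: real hdist set). ennvar (sample_space n D) (\<lambda>\<omega>. h (obs n D \<omega>)))"
proof -
  note hard = hard_dist_mem_dist_class[OF assms(1,2)]
  have "ennreal ((sqrt (sf2 - \<alpha> ^ 2) ^ 2 + sa2) / real n)
      \<le> ennvar (sample_space n (hard_dist \<alpha> (sqrt (sf2 - \<alpha> ^ 2)) sa2 0 0)) (hard_estimator n h)"
    using unbiased[OF hard] by (intro ennvar_unbiased_hard_estimator_ge assms(2-4)) (simp add: obs_hard_dist)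
  also have "\<dots> \<le> (SUP D \<in> (dist_class sf2 sa2 \<alpha> :: real hdist set). ennvar (sample_space n D) (\<lambda>\<omega>. h (obs n D \<omega>)))"
    using SUP_upper[OF hard[of 0 0], of "\<lambda>D. ennvar (sample_space n D) (\<lambda>\<omega>. h (obs n D \<omega>))"]
    by (simp add: obs_hard_dist)
  finally show ?thesis
    using assms(1) by (simp add: add.commute)
qed

theorem theorem1:
  fixes sf2 sa2 \<alpha> :: real and n :: nat
  assumes "sf2 > 0" and "sa2 \<ge> 0" and "\<bar>\<alpha>\<bar> \<le> sqrt sf2" and "n \<ge> 1"
  shows
   "(\<forall>D :: 'z hdist. D \<in> dist_class sf2 sa2 \<alpha> \<longrightarrow>
        ennvar (sample_space n D) (cv_est n \<alpha> D)
          = ennreal ((sf2 * (1 - (\<alpha> / sqrt sf2)^2) + sa2) / real n)) \<and>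
    (\<forall>h :: (nat \<Rightarrow> real \<times> real) \<Rightarrow> real.
       h \<in> borel_measurable (\<Pi>\<^sub>M i\<in>{..<n}. (borel :: (real \<times> real) measure)) \<and>
       (\<forall>D \<in> (dist_class sf2 sa2 \<alpha> :: real hdist set).
          integrable (sample_space n D) (\<lambda>\<omega>. h (obs n D \<omega>)) \<and>
          (\<integral>\<omega>. h (obs n D \<omega>) \<partial>sample_space n D) = target D)
       \<longrightarrow>
       (SUP D \<in> (dist_class sf2 sa2 \<alpha> :: real hdist set).
            ennvar (sample_space n D) (\<lambda>\<omega>. h (obs n D \<omega>)))
         \<ge> ennreal ((sf2 * (1 - (\<alpha> / sqrt sf2)^2) + sa2) / real n) \<and>
       ennreal ((sf2 * (1 - (\<alpha> / sqrt sf2)^2) + sa2) / real n)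
         = (SUP D \<in> (dist_class sf2 sa2 \<alpha> :: real hdist set).
              ennvar (sample_space n D) (cv_est n \<alpha> D)))"
proof -
  have \<alpha>2: "\<alpha> ^ 2 \<le> sf2"
    using assms(1,3) abs_le_square_iff[of \<alpha> "sqrt sf2"] by simp
  have rate: "sf2 * (1 - (\<alpha> / sqrt sf2) ^ 2) + sa2 = sa2 + (sf2 - \<alpha> ^ 2)"
    using assms(1) by (simp add: power_divide algebra_simps)
  show ?thesis
    unfolding rate
    using ennvar_cv_est_dist_class[OF _ less_imp_le[OF assms(1)] assms(2,4)]
      SUP_ennvar_cv_est[OF \<alpha>2 assms(2,4)] SUP_ennvar_unbiased_ge[OF \<alpha>2 assms(2,4)]
    by auto
qed

end
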